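(* Let $f:\mathcal{O}\to\mathcal{F}$ be a scaling map with scaling ratio $q^\lambda$, $\lambda\ge0$, and let $\tilde f:\mathcal{O}\to\mathcal{O}$, $\tilde f(x)=[f(x)]$. Then the normalized Haar measure $\mu$ on $\mathcal{O}$ is $\tilde f$-invariant, i.e. $\mu(\tilde f^{-1}(B))=\mu(B)$ for every Borel set $B\subset\mathcal{O}$.
   Context: $\mathcal{F}$ is a non-Archimedean local field with valuation ring $\mathcal{O}$, maximal ideal $\mathfrak{p}$, $q=\#\mathcal{O}/\mathfrak{p}$, normalized absolute value $|\cdot|_\mathfrak{p}$, prime element $\pi$. Fix representatives $C\subset\mathcal{O}$ of $\mathcal{O}/\mathfrak{p}$ with $0\in C$; writing $x=\sum_{n\ge v}c_n\pi^n$ ($c_n\in C$), $[x]=\sum_{n\ge0}c_n\pi^n$. A map $f:\Omega\to\mathcal{F}$ is scaling with ratio $q^\lambda$ if $|f(x)-f(y)|_\mathfrak{p}=q^\lambda|x-y|_\mathfrak{p}$ for all $x,y\in\Omega$. $\mu$ denotes Haar measure with $\mu(\mathcal{O})=1$. *)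

theory Defs
  imports "HOL-Analysis.Analysis"
begin

text \<open>A non-Archimedean local field is modelled by a field type 'a together with a
normalized absolute value absv, a prime element, the residue field size q and a fixed
set C of representatives of O/p containing 0.\<close>

definition valring :: "('a::field \<Rightarrow> real) \<Rightarrow> 'a set" where
  "valring absv = {x. absv x \<le> 1}"

definition converges_to :: "('a::field \<Rightarrow> real) \<Rightarrow> (nat \<Rightarrow> 'a) \<Rightarrow> 'a \<Rightarrow> bool" where
  "converges_to absv s l \<longleftrightarrow> (\<forall>e>0. \<exists>N. \<forall>n\<ge>N. absv (s n - l) < e)"

definition nonarch_local_field ::
  "('a::field \<Rightarrow> real) \<Rightarrow> 'a \<Rightarrow> nat \<Rightarrow> 'a set \<Rightarrow> bool" where
  "nonarch_local_field absv \<pi> q C \<longleftrightarrow>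
     (\<forall>x. absv x \<ge> 0) \<and> (\<forall>x. absv x = 0 \<longleftrightarrow> x = 0) \<and>
     (\<forall>x y. absv (x * y) = absv x * absv y) \<and>
     (\<forall>x y. absv (x + y) \<le> max (absv x) (absv y)) \<and>
     q \<ge> 2 \<and> absv \<pi> = 1 / real q \<and>
     (\<forall>x. x \<noteq> 0 \<longrightarrow> (\<exists>n::int. absv x = real q powr real_of_int n)) \<and>
     finite C \<and> card C = q \<and> 0 \<in> C \<and> C \<subseteq> valring absv \<and>
     (\<forall>x\<in>valring absv. \<exists>!c. c \<in> C \<and> absv (x - c) < 1) \<and>
     (\<forall>s::nat \<Rightarrow> 'a. (\<forall>e>0. \<exists>N. \<forall>m\<ge>N. \<forall>n\<ge>N. absv (s m - s n) < e)
         \<longrightarrow> (\<exists>l. converges_to absv s l))"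

definition ipow :: "'a::field \<Rightarrow> int \<Rightarrow> 'a" where
  "ipow \<pi> n = (if n \<ge> 0 then \<pi> ^ nat n else inverse \<pi> ^ nat (- n))"

definition pi_expansion :: "('a::field \<Rightarrow> real) \<Rightarrow> 'a \<Rightarrow> 'a set \<Rightarrow> 'a \<Rightarrow> (int \<Rightarrow> 'a) \<Rightarrow> bool" where
  "pi_expansion absv \<pi> C x c \<longleftrightarrow>
     (\<forall>n. c n \<in> C) \<and> (\<exists>v. \<forall>n<v. c n = 0) \<and>
     converges_to absv (\<lambda>N. \<Sum>n\<in>{- int N..int N}. c n * ipow \<pi> n) x"

definition bracket :: "('a::field \<Rightarrow> real) \<Rightarrow> 'a \<Rightarrow> 'a set \<Rightarrow> 'a \<Rightarrow> 'a" where
  "bracket absv \<pi> C x = (THE y. \<exists>c. pi_expansion absv \<pi> C x c \<and>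
       converges_to absv (\<lambda>N. \<Sum>n\<le>N. c (int n) * \<pi> ^ n) y)"

definition absv_open :: "('a::field \<Rightarrow> real) \<Rightarrow> 'a set \<Rightarrow> bool" where
  "absv_open absv U \<longleftrightarrow> (\<forall>x\<in>U. \<exists>r>0. {y. absv (y - x) < r} \<subseteq> U)"

definition borel_O :: "('a::field \<Rightarrow> real) \<Rightarrow> 'a set set" where
  "borel_O absv = sigma_sets (valring absv) {U \<inter> valring absv | U. absv_open absv U}"

definition normalized_haar :: "('a::field \<Rightarrow> real) \<Rightarrow> 'a measure \<Rightarrow> bool" where
  "normalized_haar absv M \<longleftrightarrow>
     space M = valring absv \<and> sets M = borel_O absv \<and> emeasure M (valring absv) = 1 \<and>
     (\<forall>a\<in>valring absv. \<forall>B\<in>sets M. emeasure M ((\<lambda>x. x + a) ` B) = emeasure M B)"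

definition scaling_map :: "('a::field \<Rightarrow> real) \<Rightarrow> nat \<Rightarrow> real \<Rightarrow> 'a set \<Rightarrow> ('a \<Rightarrow> 'a) \<Rightarrow> bool" where
  "scaling_map absv q lam \<Omega> f \<longleftrightarrow>
     (\<forall>x\<in>\<Omega>. \<forall>y\<in>\<Omega>. absv (f x - f y) = real q powr lam * absv (x - y))"

end

theory Submission
  imports Defs
begin

text \<open>
  The map \<open>y \<mapsto> y - [y]\<close> picks out the polar part of the \<pi>-adic expansion, which does not
  change on closed unit balls. The scaling ratio \<open>q\<^sup>\<lambda>\<close> lies in the value group, so \<open>\<lambda> = m\<close>
  is a natural number, and on every disc of radius \<open>q\<^sup>-\<^sup>m\<close> the map \<open>f_tilde = [f]\<close> differs
  from \<open>f\<close> by a constant; there it scales distances by exactly \<open>q\<^sup>m\<close>. Hence it maps the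
  \<open>q\<^sup>k\<close> subdiscs of radius \<open>q\<^sup>-\<^sup>k\<^sup>-\<^sup>m\<close> of such a disc injectively, and by counting
  bijectively, onto the \<open>q\<^sup>k\<close> discs of radius \<open>q\<^sup>-\<^sup>k\<close> in \<open>\<O>\<close>. So the preimage of a disc
  of radius \<open>q\<^sup>-\<^sup>k\<close> meets each of the \<open>q\<^sup>m\<close> discs of radius \<open>q\<^sup>-\<^sup>m\<close> in a single disc of
  radius \<open>q\<^sup>-\<^sup>k\<^sup>-\<^sup>m\<close>, and has measure \<open>q\<^sup>-\<^sup>k\<close>. As the discs form an intersection-stable
  generator of the Borel sets, this determines the image measure.
\<close>

section \<open>Non-Archimedean local fields\<close>

locale local_field =
  fixes absv :: "'a::field \<Rightarrow> real" and \<pi> :: 'a and q :: nat and C :: "'a set"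
  assumes absv_nonneg [simp]: "absv x \<ge> 0"
    and absv_eq_0_iff [simp]: "absv x = 0 \<longleftrightarrow> x = 0"
    and absv_mult [simp]: "absv (x * y) = absv x * absv y"
    and absv_ultrametric: "absv (x + y) \<le> max (absv x) (absv y)"
    and q_ge_2: "q \<ge> 2"
    and absv_prime [simp]: "absv \<pi> = 1 / real q"
    and absv_value_group: "x \<noteq> 0 \<Longrightarrow> \<exists>n::int. absv x = real q powr n"
    and finite_digits: "finite C"
    and card_digits: "card C = q"
    and zero_digit: "0 \<in> C"
    and digits_integral: "C \<subseteq> valring absv"
    and digit_unique: "x \<in> valring absv \<Longrightarrow> \<exists>!c. c \<in> C \<and> absv (x - c) < 1"
    and cauchy_convergent:
      "\<forall>e>0. \<exists>N. \<forall>m\<ge>N. \<forall>n\<ge>N. absv (s m - s n) < e \<Longrightarrow> \<exists>l. converges_to absv s l"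

lemma local_field_if_nonarch_local_field:
  "nonarch_local_field absv \<pi> q C \<Longrightarrow> local_field absv \<pi> q C"
  unfolding nonarch_local_field_def by unfold_locales auto

context local_field
begin

abbreviation \<O> :: "'a set" where "\<O> \<equiv> valring absv"

abbreviation radius :: "nat \<Rightarrow> real" where "radius k \<equiv> (1 / real q) ^ k"

lemma valring_iff: "x \<in> \<O> \<longleftrightarrow> absv x \<le> 1"
  by (simp add: valring_def)

lemma q_gt_1: "real q > 1"
  using q_ge_2 by simp

lemma radius_pos: "radius k > 0"
  using q_gt_1 by simp

lemma radius_le_1: "radius k \<le> 1"
  using q_gt_1 by (simp add: power_le_one)

lemma radius_antimono: "k \<le> l \<Longrightarrow> radius l \<le> radius k"
  using q_gt_1 by (simp add: power_decreasing)

lemma radius_Suc_less: "radius (Suc k) < radius k"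
  using q_gt_1 radius_pos[of k] by (simp add: divide_less_eq)

lemma radius_times_power: "real q ^ l * radius (k + l) = radius k"
  using q_gt_1 by (simp add: power_add power_one_over field_simps)

lemma ex_radius_less: "e > 0 \<Longrightarrow> \<exists>N. radius N < e"
  using real_arch_pow_inv[of e "1 / real q"] q_gt_1 by auto

lemma prime_nonzero [simp]: "\<pi> \<noteq> 0"
  using q_gt_1 absv_eq_0_iff[of \<pi>] by auto

lemma absv_zero [simp]: "absv 0 = 0"
  by simp

lemma absv_one [simp]: "absv 1 = 1"
proof -
  have "absv 1 * absv 1 = absv 1"
    using absv_mult[of 1 1] by simp
  then show ?thesis
    by simp
qed

lemma absv_minus [simp]: "absv (- x) = absv x"
proof -
  have "absv (-1) * absv (-1) = 1"
    using absv_mult[of "-1" "-1"] by simp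
  then have "absv (-1) ^ 2 = 1"
    by (simp add: power2_eq_square)
  then have "absv (-1) = 1"
    using absv_nonneg[of "-1"] by (simp add: power2_eq_1_iff)
  then show ?thesis
    using absv_mult[of "-1" x] by simp
qed

lemma absv_minus_commute: "absv (x - y) = absv (y - x)"
  by (metis absv_minus minus_diff_eq)

lemma absv_power [simp]: "absv (x ^ n) = absv x ^ n"
  by (induction n) auto

lemma absv_inverse [simp]: "absv (inverse x) = inverse (absv x)"
proof (cases "x = 0")
  case False
  then have "absv x * absv (inverse x) = 1"
    using absv_mult[of x "inverse x"] by simp
  then show ?thesis
    by (metis inverse_unique)
qed simp

lemma absv_divide [simp]: "absv (x / y) = absv x / absv y"
  by (simp add: divide_inverse)

lemma ultrametric_le: "absv x \<le> r \<Longrightarrow> absv y \<le> r \<Longrightarrow> absv (x + y) \<le> r"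
  using absv_ultrametric[of x y] by simp

lemma ultrametric_diff_le: "absv x \<le> r \<Longrightarrow> absv y \<le> r \<Longrightarrow> absv (x - y) \<le> r"
  using ultrametric_le[of x r "- y"] by simp

lemma ultrametric_dist_le: "absv (x - y) \<le> r \<Longrightarrow> absv (y - z) \<le> r \<Longrightarrow> absv (x - z) \<le> r"
  using ultrametric_le[of "x - y" r "y - z"] by simp

lemma absv_add_eq_left: "absv y < absv x \<Longrightarrow> absv (x + y) = absv x"
  using absv_ultrametric[of x y] absv_ultrametric[of "x + y" "- y"]
  by (simp add: max_def split: if_splits)

lemma absv_sum_le: "(\<And>i. i \<in> S \<Longrightarrow> absv (g i) \<le> r) \<Longrightarrow> r \<ge> 0 \<Longrightarrow> absv (sum g S) \<le> r"
  by (induction S rule: infinite_finite_induct) (auto intro: ultrametric_le)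

lemma absv_less_radius_imp_le_radius_Suc:
  assumes "absv x < radius k"
  shows "absv x \<le> radius (Suc k)"
proof (cases "x = 0")
  case False
  then obtain n :: int where n: "absv x = real q powr n"
    using absv_value_group by blast
  have radius_powr: "radius j = real q powr (- real j)" for j
    using q_gt_1 by (simp add: powr_minus powr_realpow divide_inverse power_inverse)
  have "real q powr n < real q powr (- real k)"
    using assms n radius_powr by simp
  then have "n \<le> - int (Suc k)"
    using q_gt_1 by simp
  then have "real q powr n \<le> real q powr (- real (Suc k))"
    using q_gt_1 by (simp add: flip: of_int_le_iff)
  then show ?thesis
    using n radius_powr[of "Suc k"] by linarith
qed simp

lemma absv_less_1_imp_le: "absv x < 1 \<Longrightarrow> absv x \<le> 1 / real q"
  using absv_less_radius_imp_le_radius_Suc[of x 0] by simp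

lemma valring_add: "x \<in> \<O> \<Longrightarrow> y \<in> \<O> \<Longrightarrow> x + y \<in> \<O>"
  by (simp add: valring_iff ultrametric_le)

lemma valring_diff: "x \<in> \<O> \<Longrightarrow> y \<in> \<O> \<Longrightarrow> x - y \<in> \<O>"
  by (simp add: valring_iff ultrametric_diff_le)

lemma valring_mult: "x \<in> \<O> \<Longrightarrow> y \<in> \<O> \<Longrightarrow> x * y \<in> \<O>"
  by (simp add: valring_iff mult_le_one)

lemma prime_power_in_valring: "\<pi> ^ n \<in> \<O>"
  using radius_le_1 by (simp add: valring_iff)

lemma zero_in_valring: "0 \<in> \<O>"
  by (simp add: valring_iff)

lemma absv_diff_digits:
  assumes "c \<in> C" "c' \<in> C" "c \<noteq> c'"
  shows "absv (c - c') = 1"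
proof -
  have "c' \<in> \<O>"
    using assms digits_integral by auto
  then have "\<not> absv (c' - c) < 1"
    using digit_unique[of c'] assms by force
  moreover have "absv (c - c') \<le> 1"
    using assms digits_integral valring_diff valring_iff by blast
  ultimately show ?thesis
    using absv_minus_commute[of c c'] by simp
qed

lemma converges_to_unique:
  assumes "converges_to absv s l" "converges_to absv s l'"
  shows "l = l'"
proof -
  have "absv (l - l') < e" if "e > 0" for e
  proof -
    obtain N\<^sub>1 N\<^sub>2 where "\<forall>n\<ge>N\<^sub>1. absv (s n - l) < e" "\<forall>n\<ge>N\<^sub>2. absv (s n - l') < e"
      using assms \<open>e > 0\<close> unfolding converges_to_def by blast
    then have "absv (l - s (max N\<^sub>1 N\<^sub>2)) < e" "absv (s (max N\<^sub>1 N\<^sub>2) - l') < e"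
      using absv_minus_commute by auto
    then show ?thesis
      using absv_ultrametric[of "l - s (max N\<^sub>1 N\<^sub>2)" "s (max N\<^sub>1 N\<^sub>2) - l'"] by simp
  qed
  then show ?thesis
    using absv_nonneg[of "l - l'"] absv_eq_0_iff[of "l - l'"] by (meson less_le_not_le order_le_less right_minus_eq)
qed

lemma converges_to_eventually_cong:
  assumes "converges_to absv s l" "\<And>n. n \<ge> N\<^sub>0 \<Longrightarrow> s n = t n"
  shows "converges_to absv t l"
  unfolding converges_to_def
proof (intro allI impI)
  fix e :: real
  assume "e > 0"
  then obtain N where "\<forall>n\<ge>N. absv (s n - l) < e"
    using assms(1) unfolding converges_to_def by blast
  then show "\<exists>N. \<forall>n\<ge>N. absv (t n - l) < e"
    using assms(2) by (intro exI[of _ "max N N\<^sub>0"]) auto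
qed

lemma converges_to_add_left:
  "converges_to absv s l \<Longrightarrow> converges_to absv (\<lambda>n. a + s n) (a + l)"
  unfolding converges_to_def by simp

lemma converges_to_mult_left:
  assumes "converges_to absv s l"
  shows "converges_to absv (\<lambda>n. a * s n) (a * l)"
proof (cases "a = 0")
  case False
  then have a_pos: "absv a > 0"
    using absv_nonneg[of a] absv_eq_0_iff[of a] by linarith
  show ?thesis
    unfolding converges_to_def
  proof (intro allI impI)
    fix e :: real
    assume "e > 0"
    then obtain N where "\<forall>n\<ge>N. absv (s n - l) < e / absv a"
      using assms a_pos unfolding converges_to_def by (meson divide_pos_pos)
    then have "\<forall>n\<ge>N. absv (a * s n - a * l) < e"
      using a_pos by (simp add: pos_less_divide_eq mult.commute flip: right_diff_distrib)
    then show "\<exists>N. \<forall>n\<ge>N. absv (a * s n - a * l) < e" ..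
  qed
qed (simp add: converges_to_def)

lemma converges_to_shift:
  "converges_to absv s l \<Longrightarrow> converges_to absv (\<lambda>n. s (n + k)) l"
  unfolding converges_to_def by (meson le_add1 order_trans)

lemma converges_to_if_radius_bound:
  assumes "\<And>n. absv (s n - l) \<le> radius n"
  shows "converges_to absv s l"
  unfolding converges_to_def
proof (intro allI impI)
  fix e :: real
  assume "e > 0"
  then obtain N where "radius N < e"
    using ex_radius_less by blast
  then have "\<forall>n\<ge>N. absv (s n - l) < e"
    using assms radius_antimono by (meson order_le_less_trans order_trans)
  then show "\<exists>N. \<forall>n\<ge>N. absv (s n - l) < e" ..
qed

lemma converges_to_in_valring:
  assumes "\<And>n. s n \<in> \<O>" "converges_to absv s l"
  shows "l \<in> \<O>"
proof -
  obtain N where "absv (s N - l) < 1"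
    using assms(2) unfolding converges_to_def by (meson zero_less_one order_refl)
  then have "s N - (s N - l) \<in> \<O>"
    using assms(1) valring_diff valring_iff by (meson less_imp_le)
  then show ?thesis
    by simp
qed

lemma partial_sums_converge:
  assumes "\<And>i. absv (t i) \<le> radius i"
  shows "\<exists>l. converges_to absv (\<lambda>N. \<Sum>i\<le>N. t i) l"
proof (rule cauchy_convergent, intro allI impI)
  let ?S = "\<lambda>N. \<Sum>i\<le>N. t i"
  have tail: "absv (?S (m + k) - ?S m) \<le> radius (Suc m)" for m k
  proof (induction k)
    case (Suc k)
    have "absv (t (Suc (m + k))) \<le> radius (Suc m)"
      using assms radius_antimono[of "Suc m" "Suc (m + k)"] by (meson le_add1 Suc_le_mono order_trans)
    moreover have "?S (m + Suc k) - ?S m = (?S (m + k) - ?S m) + t (Suc (m + k))"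
      by simp
    ultimately show ?case
      using Suc ultrametric_le by metis
  qed (simp add: radius_pos less_imp_le)
  have cauchy: "absv (?S m - ?S n) \<le> radius (Suc N)" if "N \<le> m" "N \<le> n" for N m n
  proof -
    have "absv (?S m - ?S n) \<le> radius (Suc (min m n))"
      using tail[of m "n - m"] tail[of n "m - n"] absv_minus_commute[of "?S m"]
      by (cases "m \<le> n") (simp_all add: min_def)
    also have "\<dots> \<le> radius (Suc N)"
      using that by (intro radius_antimono) simp
    finally show ?thesis .
  qed
  fix e :: real
  assume "e > 0"
  then obtain N where "radius N < e"
    using ex_radius_less by blast
  then have "radius (Suc N) < e"
    using radius_Suc_less[of N] by linarith
  then show "\<exists>N. \<forall>m\<ge>N. \<forall>n\<ge>N. absv (?S m - ?S n) < e"
    using cauchy by (meson order_le_less_trans)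
qed

section \<open>\<pi>-adic expansions and the bracket\<close>

definition digit :: "'a \<Rightarrow> 'a" where
  "digit z = (THE c. c \<in> C \<and> absv (z - c) < 1)"

lemma digit_in_digits: "z \<in> \<O> \<Longrightarrow> digit z \<in> C"
  and absv_sub_digit_le: "z \<in> \<O> \<Longrightarrow> absv (z - digit z) \<le> 1 / real q"
  using theI'[OF digit_unique[of z]] absv_less_1_imp_le unfolding digit_def by blast+

lemma absv_sub_scaled_digit_le:
  assumes "absv y \<le> radius k"
  shows "digit (y / \<pi> ^ k) \<in> C" "absv (y - digit (y / \<pi> ^ k) * \<pi> ^ k) \<le> radius (Suc k)"
proof -
  let ?z = "y / \<pi> ^ k"
  have "?z \<in> \<O>"
    using assms radius_pos by (simp add: valring_iff)
  then show "digit ?z \<in> C"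
    by (rule digit_in_digits)
  have "y - digit ?z * \<pi> ^ k = \<pi> ^ k * (?z - digit ?z)"
    by (simp add: field_simps)
  then show "absv (y - digit ?z * \<pi> ^ k) \<le> radius (Suc k)"
    using mult_left_mono[OF absv_sub_digit_le[OF \<open>?z \<in> \<O>\<close>], of "radius k"] radius_pos[of k]
    by simp
qed

primrec expansion_tail :: "'a \<Rightarrow> nat \<Rightarrow> 'a" where
  "expansion_tail x 0 = x"
| "expansion_tail x (Suc n) = (expansion_tail x n - digit (expansion_tail x n)) / \<pi>"

lemma expansion_tail_in_valring: "x \<in> \<O> \<Longrightarrow> expansion_tail x n \<in> \<O>"
  by (induction n) (use absv_sub_digit_le radius_pos[of 1] in \<open>auto simp: valring_iff field_simps\<close>)

lemma expansion_tail_eq: "x = (\<Sum>i<N. digit (expansion_tail x i) * \<pi> ^ i) + \<pi> ^ N * expansion_tail x N"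
proof (induction N)
  case (Suc N)
  have "\<pi> ^ N * expansion_tail x N
      = \<pi> ^ N * digit (expansion_tail x N) + \<pi> ^ Suc N * expansion_tail x (Suc N)"
    by (simp add: field_simps)
  then have "(\<Sum>i<N. digit (expansion_tail x i) * \<pi> ^ i) + \<pi> ^ N * expansion_tail x N
      = (\<Sum>i<Suc N. digit (expansion_tail x i) * \<pi> ^ i) + \<pi> ^ Suc N * expansion_tail x (Suc N)"
    by (simp add: algebra_simps)
  then show ?case
    using Suc.IH by simp
qed simp

lemma truncated_expansion_approx:
  assumes "x \<in> \<O>"
  shows "absv (x - (\<Sum>i<N. digit (expansion_tail x i) * \<pi> ^ i)) \<le> radius N"
proof -
  have "x - (\<Sum>i<N. digit (expansion_tail x i) * \<pi> ^ i) = \<pi> ^ N * expansion_tail x N"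
    using expansion_tail_eq[of x N] by (simp add: algebra_simps)
  then show ?thesis
    using expansion_tail_in_valring[OF assms, of N] radius_pos[of N]
    by (simp add: valring_iff mult_left_le)
qed

lemma ipow_of_nat [simp]: "ipow \<pi> (int n) = \<pi> ^ n"
  by (simp add: ipow_def)

lemma ipow_diff_of_nat: "ipow \<pi> (int i - int j) = inverse (\<pi> ^ j) * \<pi> ^ i"
proof (cases "j \<le> i")
  case True
  then have "\<pi> ^ i = \<pi> ^ (i - j) * \<pi> ^ j"
    by (simp flip: power_add)
  with True show ?thesis
    by (simp add: ipow_def nat_diff_distrib)
next
  case False
  then have "\<pi> ^ j = \<pi> ^ (j - i) * \<pi> ^ i"
    by (simp flip: power_add)
  with False show ?thesis
    by (simp add: ipow_def nat_diff_distrib power_inverse)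
qed

lemma absv_ipow_neg: "n < 0 \<Longrightarrow> absv (ipow \<pi> n) = real q ^ nat (- n)"
  by (simp add: ipow_def power_inverse power_one_over)

lemma ex_prime_power_times_in_valring: "\<exists>j. \<pi> ^ j * y \<in> \<O>"
proof (cases "y = 0")
  case False
  then obtain n :: int where n: "absv y = real q powr n"
    using absv_value_group by blast
  have "absv (\<pi> ^ nat n * y) = real q powr (real_of_int n - real (nat n))"
    using n q_gt_1 by (simp add: powr_diff powr_realpow power_one_over)
  also have "\<dots> \<le> 1"
    using q_gt_1 powr_mono[of "real_of_int n - real (nat n)" 0 "real q"] by simp
  finally show ?thesis
    by (auto simp: valring_iff)
qed (auto simp: zero_in_valring)

lemma sum_symmetric_reindex:
  assumes "\<forall>n < - int j. c n = 0" "j \<le> N"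
  shows "(\<Sum>n\<in>{- int N..int N}. c n * ipow \<pi> n)
       = inverse (\<pi> ^ j) * (\<Sum>i<N + j + 1. c (int i - int j) * \<pi> ^ i)"
proof -
  have "(\<Sum>n\<in>{- int N..int N}. c n * ipow \<pi> n) = (\<Sum>n\<in>{- int j..int N}. c n * ipow \<pi> n)"
    using assms by (intro sum.mono_neutral_right) auto
  also have "{- int j..int N} = (\<lambda>i. int i - int j) ` {..<N + j + 1}"
  proof
    show "{- int j..int N} \<subseteq> (\<lambda>i. int i - int j) ` {..<N + j + 1}"
    proof
      fix n
      assume "n \<in> {- int j..int N}"
      then have "n = int (nat (n + int j)) - int j" "nat (n + int j) < N + j + 1"
        by auto
      then show "n \<in> (\<lambda>i. int i - int j) ` {..<N + j + 1}"
        by blast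
    qed
  qed auto
  also have "(\<Sum>n\<in>(\<lambda>i. int i - int j) ` {..<N + j + 1}. c n * ipow \<pi> n)
      = (\<Sum>i<N + j + 1. inverse (\<pi> ^ j) * (c (int i - int j) * \<pi> ^ i))"
    by (subst sum.reindex) (auto simp: inj_on_def ipow_diff_of_nat mult_ac)
  finally show ?thesis
    by (simp only: sum_distrib_left)
qed

lemma pi_expansion_exists: "\<exists>c. pi_expansion absv \<pi> C y c"
proof -
  obtain j where x: "\<pi> ^ j * y \<in> \<O>"
    using ex_prime_power_times_in_valring by blast
  define d where "d i = digit (expansion_tail (\<pi> ^ j * y) i)" for i
  define c where "c n = (if - int j \<le> n then d (nat (n + int j)) else 0)" for n
  have c_digits: "c n \<in> C" for n
    using digit_in_digits expansion_tail_in_valring[OF x] zero_digit by (simp add: c_def d_def)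
  have c_vanishes: "\<forall>n < - int j. c n = 0"
    by (simp add: c_def)
  have "converges_to absv (\<lambda>N. \<Sum>i<N. d i * \<pi> ^ i) (\<pi> ^ j * y)"
    using truncated_expansion_approx[OF x] absv_minus_commute unfolding d_def
    by (intro converges_to_if_radius_bound) metis
  then have "converges_to absv (\<lambda>N. inverse (\<pi> ^ j) * (\<Sum>i<N + (j + 1). d i * \<pi> ^ i))
      (inverse (\<pi> ^ j) * (\<pi> ^ j * y))"
    by (intro converges_to_mult_left converges_to_shift)
  then have "converges_to absv (\<lambda>N. inverse (\<pi> ^ j) * (\<Sum>i<N + j + 1. d i * \<pi> ^ i)) y"
    by (simp add: add.assoc flip: mult.assoc del: sum.lessThan_Suc)
  then have "converges_to absv (\<lambda>N. \<Sum>n\<in>{- int N..int N}. c n * ipow \<pi> n) y"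
  proof (rule converges_to_eventually_cong[where N\<^sub>0 = j])
    fix N
    assume "j \<le> N"
    with c_vanishes have "(\<Sum>n\<in>{- int N..int N}. c n * ipow \<pi> n)
        = inverse (\<pi> ^ j) * (\<Sum>i<N + j + 1. c (int i - int j) * \<pi> ^ i)"
      by (rule sum_symmetric_reindex)
    then show "inverse (\<pi> ^ j) * (\<Sum>i<N + j + 1. d i * \<pi> ^ i)
        = (\<Sum>n\<in>{- int N..int N}. c n * ipow \<pi> n)"
      by (simp add: c_def del: sum.lessThan_Suc)
  qed
  then show ?thesis
    using c_digits c_vanishes unfolding pi_expansion_def by blast
qed

definition polar_part :: "(int \<Rightarrow> 'a) \<Rightarrow> nat \<Rightarrow> 'a" where
  "polar_part c j = (\<Sum>n\<in>{- int j..<0}. c n * ipow \<pi> n)"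

lemma sum_symmetric_split:
  assumes "\<forall>n < - int j. c n = 0" "j \<le> N"
  shows "(\<Sum>n\<in>{- int N..int N}. c n * ipow \<pi> n) = polar_part c j + (\<Sum>n\<le>N. c (int n) * \<pi> ^ n)"
proof -
  have "(\<Sum>n\<in>{- int N..int N}. c n * ipow \<pi> n) = (\<Sum>n\<in>{- int j..<0} \<union> {0..int N}. c n * ipow \<pi> n)"
    using assms by (intro sum.mono_neutral_right) auto
  also have "\<dots> = polar_part c j + (\<Sum>n\<in>{0..int N}. c n * ipow \<pi> n)"
    unfolding polar_part_def by (rule sum.union_disjoint) auto
  also have "{0..int N} = int ` {..N}"
    by (simp add: atMost_atLeast0 image_int_atLeastAtMost)
  also have "(\<Sum>n\<in>int ` {..N}. c n * ipow \<pi> n) = (\<Sum>n\<le>N. c (int n) * \<pi> ^ n)"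
    by (subst sum.reindex) auto
  finally show ?thesis .
qed

lemma pi_expansion_decompose:
  assumes "pi_expansion absv \<pi> C y c" "\<forall>n < - int j. c n = 0"
    and "converges_to absv (\<lambda>N. \<Sum>n\<le>N. c (int n) * \<pi> ^ n) z"
  shows "y = polar_part c j + z"
proof -
  have "converges_to absv (\<lambda>N. polar_part c j + (\<Sum>n\<le>N. c (int n) * \<pi> ^ n)) (polar_part c j + z)"
    using assms(3) by (rule converges_to_add_left)
  then have "converges_to absv (\<lambda>N. \<Sum>n\<in>{- int N..int N}. c n * ipow \<pi> n) (polar_part c j + z)"
    by (rule converges_to_eventually_cong[where N\<^sub>0 = j]) (simp add: sum_symmetric_split[OF assms(2)])
  moreover have "converges_to absv (\<lambda>N. \<Sum>n\<in>{- int N..int N}. c n * ipow \<pi> n) y"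
    using assms(1) unfolding pi_expansion_def by blast
  ultimately show ?thesis
    using converges_to_unique by blast
qed

lemma absv_polar_part_diff_le:
  assumes "\<forall>n. c n \<in> C" "\<forall>n. c' n \<in> C"
  shows "absv (polar_part c j - polar_part c' j) \<le> real q ^ j"
proof -
  have "polar_part c j - polar_part c' j = (\<Sum>n\<in>{- int j..<0}. (c n - c' n) * ipow \<pi> n)"
    unfolding polar_part_def by (simp add: sum_subtractf algebra_simps)
  also have "absv \<dots> \<le> real q ^ j"
  proof (rule absv_sum_le)
    fix n
    assume n: "n \<in> {- int j..<0}"
    have "absv (c n - c' n) \<le> 1"
      using assms digits_integral valring_diff valring_iff by blast
    moreover have "absv (ipow \<pi> n) \<le> real q ^ j"
      using n q_gt_1 by (simp add: absv_ipow_neg nat_le_iff power_increasing)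
    ultimately show "absv ((c n - c' n) * ipow \<pi> n) \<le> real q ^ j"
      using mult_mono[of "absv (c n - c' n)" 1 "absv (ipow \<pi> n)" "real q ^ j"] by simp
  qed simp
  finally show ?thesis .
qed

text \<open>The lowest digit in which \<open>c\<close> and \<open>c'\<close> differ would dominate the difference, by the
  strict triangle inequality.\<close>

lemma polar_part_eqI:
  assumes "\<forall>n. c n \<in> C" "\<forall>n. c' n \<in> C"
  shows "absv (polar_part c j - polar_part c' j) \<le> 1 \<Longrightarrow> polar_part c j = polar_part c' j"
proof (induction j)
  case (Suc j)
  let ?a = "- int (Suc j)"
  have split: "polar_part d (Suc j) = d ?a * ipow \<pi> ?a + polar_part d j" for d
  proof -
    have "{?a..<0} = insert ?a {- int j..<0}"
      by auto
    then show ?thesis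
      unfolding polar_part_def by simp
  qed
  have "nat (- ?a) = Suc j"
    by (metis nat_int minus_minus)
  then have absv_ipow_lowest: "absv (ipow \<pi> ?a) = real q ^ Suc j"
    using absv_ipow_neg[of ?a] by simp
  let ?A = "(c ?a - c' ?a) * ipow \<pi> ?a" and ?R = "polar_part c j - polar_part c' j"
  have diff: "polar_part c (Suc j) - polar_part c' (Suc j) = ?A + ?R"
    using split[of c] split[of c'] by (simp add: algebra_simps)
  have lowest_eq: "c ?a = c' ?a"
  proof (rule ccontr)
    assume "c ?a \<noteq> c' ?a"
    then have "absv ?A = real q ^ Suc j"
      using absv_diff_digits assms absv_ipow_lowest by simp
    moreover have "absv ?R < real q ^ Suc j"
      using absv_polar_part_diff_le[OF assms, of j] q_gt_1 by (meson order_le_less_trans power_strict_increasing_iff lessI)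
    ultimately have "absv (?A + ?R) = real q ^ Suc j"
      by (simp add: absv_add_eq_left)
    moreover have "real q ^ Suc j > 1"
      using q_gt_1 by (intro one_less_power) auto
    ultimately show False
      using Suc.prems diff by simp
  qed
  then have "polar_part c j = polar_part c' j"
    using Suc diff by simp
  then show ?case
    using split[of c] split[of c'] lowest_eq by simp
qed (simp add: polar_part_def)

definition is_bracket :: "'a \<Rightarrow> 'a \<Rightarrow> bool" where
  "is_bracket y z \<longleftrightarrow>
     (\<exists>c. pi_expansion absv \<pi> C y c \<and> converges_to absv (\<lambda>N. \<Sum>n\<le>N. c (int n) * \<pi> ^ n) z)"

lemma ex_is_bracket: "\<exists>z. is_bracket y z"
proof -
  obtain c where c: "pi_expansion absv \<pi> C y c"
    using pi_expansion_exists by blast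
  have "absv (c (int i) * \<pi> ^ i) \<le> radius i" for i
    using c digits_integral unfolding pi_expansion_def
    by (auto simp: valring_iff radius_pos mult_left_le_one_le)
  then obtain z where "converges_to absv (\<lambda>N. \<Sum>n\<le>N. c (int n) * \<pi> ^ n) z"
    using partial_sums_converge[of "\<lambda>i. c (int i) * \<pi> ^ i"] by blast
  then show ?thesis
    using c unfolding is_bracket_def by blast
qed

lemma is_bracket_in_valring:
  assumes "is_bracket y z"
  shows "z \<in> \<O>"
proof -
  obtain c where c: "\<forall>n. c n \<in> C" "converges_to absv (\<lambda>N. \<Sum>n\<le>N. c (int n) * \<pi> ^ n) z"
    using assms unfolding is_bracket_def pi_expansion_def by blast
  have "c (int n) * \<pi> ^ n \<in> \<O>" for n
    using c(1) digits_integral valring_mult prime_power_in_valring by blast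
  then have "(\<Sum>n\<le>N. c (int n) * \<pi> ^ n) \<in> \<O>" for N
    by (simp add: valring_iff absv_sum_le)
  then show ?thesis
    using c(2) by (rule converges_to_in_valring)
qed

lemma is_bracket_diff:
  assumes "is_bracket y z" "is_bracket y' z'" "absv (y - y') \<le> 1"
  shows "z' - z = y' - y"
proof -
  obtain c c' where c: "pi_expansion absv \<pi> C y c" "converges_to absv (\<lambda>N. \<Sum>n\<le>N. c (int n) * \<pi> ^ n) z"
    and c': "pi_expansion absv \<pi> C y' c'" "converges_to absv (\<lambda>N. \<Sum>n\<le>N. c' (int n) * \<pi> ^ n) z'"
    using assms(1,2) unfolding is_bracket_def by blast
  obtain v v' where "\<forall>n<v. c n = 0" "\<forall>n<v'. c' n = 0"
    using c(1) c'(1) unfolding pi_expansion_def by blast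
  then obtain j where vanish: "\<forall>n < - int j. c n = 0" "\<forall>n < - int j. c' n = 0"
    by (intro that[of "nat (max (- v) (- v'))"]) auto
  have y: "y = polar_part c j + z" and y': "y' = polar_part c' j + z'"
    using pi_expansion_decompose c c' vanish by blast+
  have "polar_part c j - polar_part c' j = (y - y') + (z' - z)"
    using y y' by (simp add: algebra_simps)
  moreover have "absv (z' - z) \<le> 1"
    using is_bracket_in_valring assms(1,2) valring_diff valring_iff by blast
  ultimately have "absv (polar_part c j - polar_part c' j) \<le> 1"
    using assms(3) ultrametric_le by simp
  then have "polar_part c j = polar_part c' j"
    using polar_part_eqI c(1) c'(1) unfolding pi_expansion_def by blast
  then show ?thesis
    using y y' by (simp add: algebra_simps)
qed

lemma is_bracket_bracket: "is_bracket y (bracket absv \<pi> C y)"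
proof -
  have "\<exists>!z. is_bracket y z"
    using ex_is_bracket is_bracket_diff[of y _ y] by force
  then show ?thesis
    unfolding bracket_def is_bracket_def[symmetric] by (rule theI')
qed

lemma bracket_in_valring: "bracket absv \<pi> C y \<in> \<O>"
  using is_bracket_bracket is_bracket_in_valring by blast

text \<open>\<open>y - [y]\<close> is the polar part of \<open>y\<close>, which does not change on closed unit balls.\<close>

lemma bracket_diff:
  "absv (y - y') \<le> 1 \<Longrightarrow> bracket absv \<pi> C y' - bracket absv \<pi> C y = y' - y"
  using is_bracket_diff is_bracket_bracket by blast

section \<open>Discs\<close>

definition disc :: "'a \<Rightarrow> nat \<Rightarrow> 'a set" where
  "disc x k = {y. absv (y - x) \<le> radius k}"

lemma mem_disc [simp]: "y \<in> disc x k \<longleftrightarrow> absv (y - x) \<le> radius k"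
  by (simp add: disc_def)

lemma center_in_disc: "x \<in> disc x k"
  using radius_pos by (simp add: less_imp_le)

lemma disc_subset_valring: "x \<in> \<O> \<Longrightarrow> disc x k \<subseteq> \<O>"
proof
  fix y
  assume "x \<in> \<O>" "y \<in> disc x k"
  then have "y - x \<in> \<O>" "x \<in> \<O>"
    using radius_le_1[of k] by (auto simp: valring_iff)
  then show "y \<in> \<O>"
    using valring_add by fastforce
qed

lemma disc_eq_iff: "disc x k = disc y k \<longleftrightarrow> absv (x - y) \<le> radius k"
proof
  assume xy: "absv (x - y) \<le> radius k"
  then have yx: "absv (y - x) \<le> radius k"
    by (simp add: absv_minus_commute)
  show "disc x k = disc y k"
  proof (intro equalityI subsetI)
    fix z
    show "z \<in> disc x k \<Longrightarrow> z \<in> disc y k"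
      using xy ultrametric_dist_le[of z x "radius k" y] by simp
    show "z \<in> disc y k \<Longrightarrow> z \<in> disc x k"
      using yx ultrametric_dist_le[of z y "radius k" x] by simp
  qed
next
  assume "disc x k = disc y k"
  then have "x \<in> disc y k"
    using center_in_disc[of x k] by blast
  then show "absv (x - y) \<le> radius k"
    by simp
qed

lemma disc_eq_if_mem: "y \<in> disc x k \<Longrightarrow> disc y k = disc x k"
  by (simp add: disc_eq_iff)

lemma disc_eq_if_not_disjoint: "disc x k \<inter> disc y k \<noteq> {} \<Longrightarrow> disc x k = disc y k"
  using disc_eq_if_mem by blast

lemma disc_subset_disc:
  assumes "k \<le> l" "y \<in> disc x k"
  shows "disc y l \<subseteq> disc x k"
proof
  fix z
  assume "z \<in> disc y l"
  then have "absv (z - y) \<le> radius k"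
    using radius_antimono[OF assms(1)] by simp
  with assms(2) show "z \<in> disc x k"
    using ultrametric_dist_le[of z y "radius k" x] by simp
qed

lemma translate_disc: "(\<lambda>z. z + a) ` disc x k = disc (x + a) k"
proof
  show "disc (x + a) k \<subseteq> (\<lambda>z. z + a) ` disc x k"
  proof
    fix y
    assume "y \<in> disc (x + a) k"
    then have "y - a \<in> disc x k"
      by (simp add: algebra_simps)
    then show "y \<in> (\<lambda>z. z + a) ` disc x k"
      by (metis diff_add_cancel image_eqI)
  qed
qed (simp add: image_subset_iff)

lemma absv_openI_discs:
  assumes "\<And>z. z \<in> U \<Longrightarrow> \<exists>k. disc z k \<subseteq> U"
  shows "absv_open absv U"
  unfolding absv_open_def
proof
  fix z
  assume "z \<in> U"
  then obtain k where "disc z k \<subseteq> U"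
    using assms by blast
  moreover have "{y. absv (y - z) < radius k} \<subseteq> disc z k"
    by (auto simp: less_imp_le)
  ultimately show "\<exists>r>0. {y. absv (y - z) < r} \<subseteq> U"
    using radius_pos by blast
qed

lemma absv_open_disc: "absv_open absv (disc x k)"
  by (rule absv_openI_discs) (metis disc_eq_if_mem order_refl)

lemma disc_zero_zero: "disc 0 0 = \<O>"
  by (simp add: disc_def valring_def)

lemma finite_discs:
  assumes "S \<subseteq> \<O>"
  shows "finite ((\<lambda>z. disc z l) ` S)"
proof (rule finite_subset)
  let ?sum = "\<lambda>d. \<Sum>i<l. d i * \<pi> ^ i"
  show "finite ((\<lambda>d. disc (?sum d) l) ` ({..<l} \<rightarrow>\<^sub>E C))"
    by (simp add: finite_PiE finite_digits)
  show "(\<lambda>z. disc z l) ` S \<subseteq> (\<lambda>d. disc (?sum d) l) ` ({..<l} \<rightarrow>\<^sub>E C)"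
  proof
    fix b
    assume "b \<in> (\<lambda>z. disc z l) ` S"
    then obtain z where z: "z \<in> \<O>" "b = disc z l"
      using assms by blast
    define d where "d = restrict (\<lambda>i. digit (expansion_tail z i)) {..<l}"
    have "d \<in> {..<l} \<rightarrow>\<^sub>E C"
      using digit_in_digits expansion_tail_in_valring z(1) by (simp add: d_def)
    moreover have "?sum d = (\<Sum>i<l. digit (expansion_tail z i) * \<pi> ^ i)"
      by (simp add: d_def)
    then have "b = disc (?sum d) l"
      using truncated_expansion_approx[OF z(1)] z(2) by (simp add: disc_eq_iff)
    ultimately show "b \<in> (\<lambda>d. disc (?sum d) l) ` ({..<l} \<rightarrow>\<^sub>E C)"
      by blast
  qed
qed

lemma disc_split_digits: "disc 0 k = (\<Union>c\<in>C. disc (c * \<pi> ^ k) (Suc k))"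
proof
  show "disc 0 k \<subseteq> (\<Union>c\<in>C. disc (c * \<pi> ^ k) (Suc k))"
  proof
    fix y
    assume "y \<in> disc 0 k"
    then have "digit (y / \<pi> ^ k) \<in> C" "y \<in> disc (digit (y / \<pi> ^ k) * \<pi> ^ k) (Suc k)"
      using absv_sub_scaled_digit_le[of y k] by simp_all
    then show "y \<in> (\<Union>c\<in>C. disc (c * \<pi> ^ k) (Suc k))"
      by blast
  qed
  show "(\<Union>c\<in>C. disc (c * \<pi> ^ k) (Suc k)) \<subseteq> disc 0 k"
  proof
    fix y
    assume "y \<in> (\<Union>c\<in>C. disc (c * \<pi> ^ k) (Suc k))"
    then obtain c where c: "c \<in> C" "absv (y - c * \<pi> ^ k) \<le> radius (Suc k)"
      by auto
    have "absv (c * \<pi> ^ k) \<le> radius k"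
      using c(1) digits_integral radius_pos[of k] by (auto simp: valring_iff mult_left_le_one_le)
    moreover have "absv (y - c * \<pi> ^ k) \<le> radius k"
      using c(2) radius_Suc_less[of k] by linarith
    ultimately show "y \<in> disc 0 k"
      using ultrametric_le[of "y - c * \<pi> ^ k" "radius k" "c * \<pi> ^ k"] by simp
  qed
qed

lemma disjoint_family_disc_split_digits: "disjoint_family_on (\<lambda>c. disc (c * \<pi> ^ k) (Suc k)) C"
  unfolding disjoint_family_on_def
proof (intro ballI impI)
  fix c c'
  assume c: "c \<in> C" "c' \<in> C" "c \<noteq> c'"
  have "absv (c * \<pi> ^ k - c' * \<pi> ^ k) = radius k"
    using absv_diff_digits[OF c] by (simp flip: left_diff_distrib)
  then have "\<not> absv (c * \<pi> ^ k - c' * \<pi> ^ k) \<le> radius (Suc k)"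
    using radius_Suc_less[of k] by linarith
  then show "disc (c * \<pi> ^ k) (Suc k) \<inter> disc (c' * \<pi> ^ k) (Suc k) = {}"
    using disc_eq_if_not_disjoint disc_eq_iff by blast
qed

lemma dist_le_if_same_disc: "z \<in> disc a k \<Longrightarrow> w \<in> disc a k \<Longrightarrow> absv (z - w) \<le> radius k"
  using ultrametric_dist_le[of z a "radius k" w] absv_minus_commute[of w a] by simp

lemma discs_nested_or_disjoint:
  "disc x k \<inter> disc y l = {} \<or> disc y l \<subseteq> disc x k \<or> disc x k \<subseteq> disc y l"
proof (cases "disc x k \<inter> disc y l = {}")
  case False
  then obtain w where w: "w \<in> disc x k" "w \<in> disc y l"
    by blast
  show ?thesis
  proof (cases "k \<le> l")
    case True
    then show ?thesis
      using disc_subset_disc[OF True w(1)] disc_eq_if_mem[OF w(2)] by simp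
  next
    case False
    then show ?thesis
      using disc_subset_disc[of l k w y] w(2) disc_eq_if_mem[OF w(1)] by simp
  qed
qed simp

definition valring_discs :: "'a set set" where
  "valring_discs = insert {} (\<Union>k. (\<lambda>z. disc z k) ` \<O>)"

lemma valring_discs_subset_Pow: "valring_discs \<subseteq> Pow \<O>"
  unfolding valring_discs_def using disc_subset_valring by blast

lemma countable_valring_discs: "countable valring_discs"
  unfolding valring_discs_def
proof (intro countable_insert countable_UN[OF countableI_type])
  fix k
  show "countable ((\<lambda>z. disc z k) ` \<O>)"
    by (rule countable_finite[OF finite_discs]) simp
qed

lemma Int_stable_valring_discs: "Int_stable valring_discs"
  unfolding Int_stable_def
proof (intro ballI)
  fix a b
  assume ab: "a \<in> valring_discs" "b \<in> valring_discs"
  then have "a \<inter> b = {} \<or> b \<subseteq> a \<or> a \<subseteq> b"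
    unfolding valring_discs_def using discs_nested_or_disjoint by blast
  then show "a \<inter> b \<in> valring_discs"
    using ab by (metis Int_absorb1 Int_absorb2 insertI1 valring_discs_def)
qed

lemma absv_open_eq_Union_discs:
  assumes "absv_open absv U"
  shows "U \<inter> \<O> = \<Union>{b \<in> valring_discs. b \<subseteq> U}"
proof
  show "U \<inter> \<O> \<subseteq> \<Union>{b \<in> valring_discs. b \<subseteq> U}"
  proof
    fix z
    assume z: "z \<in> U \<inter> \<O>"
    then obtain r where r: "r > 0" "{y. absv (y - z) < r} \<subseteq> U"
      using assms unfolding absv_open_def by blast
    then obtain k where "radius k < r"
      using ex_radius_less by blast
    then have "disc z k \<subseteq> {y. absv (y - z) < r}"
      by (auto simp del: mem_disc simp add: disc_def)
    then have "disc z k \<subseteq> U"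
      using r(2) by (rule subset_trans)
    moreover have "disc z k \<in> valring_discs"
      unfolding valring_discs_def using z by blast
    ultimately show "z \<in> \<Union>{b \<in> valring_discs. b \<subseteq> U}"
      using center_in_disc by blast
  qed
  show "\<Union>{b \<in> valring_discs. b \<subseteq> U} \<subseteq> U \<inter> \<O>"
    using valring_discs_subset_Pow by blast
qed

lemma borel_O_eq_sigma_discs: "borel_O absv = sigma_sets \<O> valring_discs"
proof
  have "valring_discs \<subseteq> {U \<inter> \<O> |U. absv_open absv U}"
  proof
    fix b
    assume "b \<in> valring_discs"
    then consider "b = {}" | x k where "b = disc x k" "x \<in> \<O>"
      unfolding valring_discs_def by blast
    then show "b \<in> {U \<inter> \<O> |U. absv_open absv U}"
    proof cases
      case 1
      then show ?thesis
        unfolding absv_open_def by blast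
    next
      case 2
      then have "b = disc x k \<inter> \<O>"
        using disc_subset_valring by blast
      then show ?thesis
        using absv_open_disc by blast
    qed
  qed
  then show "sigma_sets \<O> valring_discs \<subseteq> borel_O absv"
    unfolding borel_O_def by (rule sigma_sets_mono')
  have "U \<inter> \<O> \<in> sigma_sets \<O> valring_discs" if "absv_open absv U" for U
    unfolding absv_open_eq_Union_discs[OF that]
  proof (rule sigma_sets_UNION)
    show "countable {b \<in> valring_discs. b \<subseteq> U}"
      using countable_valring_discs by (rule countable_subset[OF Collect_subset])
  qed auto
  then show "borel_O absv \<subseteq> sigma_sets \<O> valring_discs"
    unfolding borel_O_def by (intro sigma_sets_mono) blast
qed

end

section \<open>Haar measure of discs\<close>

locale haar_measure = local_field +
  fixes M :: "'a measure"
  assumes normalized_haar: "normalized_haar absv M"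
begin

lemma space_eq: "space M = \<O>"
  and sets_eq: "sets M = borel_O absv"
  and emeasure_valring: "emeasure M \<O> = 1"
  and emeasure_translate: "a \<in> \<O> \<Longrightarrow> B \<in> sets M \<Longrightarrow> emeasure M ((\<lambda>x. x + a) ` B) = emeasure M B"
  using normalized_haar unfolding normalized_haar_def by blast+

sublocale finite_measure M
  by (rule finite_measureI) (simp add: space_eq emeasure_valring)

lemma disc_in_sets: "x \<in> \<O> \<Longrightarrow> disc x k \<in> sets M"
  unfolding sets_eq borel_O_def using absv_open_disc disc_subset_valring by blast

lemma measure_translate_disc:
  assumes "a \<in> \<O>" "x \<in> \<O>"
  shows "measure M (disc (x + a) k) = measure M (disc x k)"
  using emeasure_translate[OF assms(1) disc_in_sets[OF assms(2)]] translate_disc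
  by (simp add: measure_def)

lemma measure_disc: "x \<in> \<O> \<Longrightarrow> measure M (disc x k) = radius k"
proof -
  have "measure M (disc 0 k) = radius k"
  proof (induction k)
    case 0
    then show ?case
      using emeasure_valring disc_zero_zero by (simp add: measure_def)
  next
    case (Suc k)
    have digit_in: "c * \<pi> ^ k \<in> \<O>" if "c \<in> C" for c
      using that digits_integral valring_mult prime_power_in_valring by blast
    have "radius k = (\<Sum>c\<in>C. measure M (disc (c * \<pi> ^ k) (Suc k)))"
      unfolding Suc.IH[symmetric] disc_split_digits
      using disc_in_sets digit_in
      by (intro finite_measure_finite_Union finite_digits disjoint_family_disc_split_digits) blast+
    also have "\<dots> = real q * measure M (disc 0 (Suc k))"
      using measure_translate_disc[OF digit_in zero_in_valring] card_digits by simp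
    finally show ?case
      using q_gt_1 by (simp add: field_simps)
  qed
  then show "x \<in> \<O> \<Longrightarrow> measure M (disc x k) = radius k"
    using measure_translate_disc[of x 0 k] zero_in_valring by simp
qed

lemma measure_union_of_discs:
  assumes "S \<subseteq> \<O>" "\<And>z. z \<in> S \<Longrightarrow> disc z l \<subseteq> S"
  shows "measure M S = card ((\<lambda>z. disc z l) ` S) * radius l"
proof -
  let ?D = "(\<lambda>z. disc z l) ` S"
  have "S = \<Union>?D"
    using assms(2) center_in_disc by blast
  moreover have "measure M (\<Union>b\<in>?D. id b) = (\<Sum>b\<in>?D. measure M (id b))"
  proof (rule finite_measure_finite_Union)
    show "finite ?D"
      using assms(1) by (rule finite_discs)
    show "id ` ?D \<subseteq> sets M"
      using assms(1) disc_in_sets by auto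
    show "disjoint_family_on id ?D"
      unfolding disjoint_family_on_def using disc_eq_if_not_disjoint by auto
  qed
  moreover have "(\<Sum>b\<in>?D. measure M b) = (\<Sum>b\<in>?D. radius l)"
    using measure_disc assms(1) by (intro sum.cong) auto
  ultimately show ?thesis
    by simp
qed

lemma measure_eq_sum_discs:
  assumes "S \<in> sets M"
  shows "measure M S = (\<Sum>b\<in>(\<lambda>z. disc z l) ` \<O>. measure M (S \<inter> b))"
proof -
  let ?D = "(\<lambda>z. disc z l) ` \<O>"
  have "(\<Union>b\<in>?D. S \<inter> b) = S"
    using sets.sets_into_space[OF assms] space_eq center_in_disc by blast
  moreover have "measure M (\<Union>b\<in>?D. S \<inter> b) = (\<Sum>b\<in>?D. measure M (S \<inter> b))"
  proof (rule finite_measure_finite_Union)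
    show "finite ?D"
      by (rule finite_discs) simp
    show "(\<lambda>b. S \<inter> b) ` ?D \<subseteq> sets M"
      using assms disc_in_sets by blast
    show "disjoint_family_on (\<lambda>b. S \<inter> b) ?D"
      unfolding disjoint_family_on_def using disc_eq_if_not_disjoint by blast
  qed
  ultimately show ?thesis
    by simp
qed

text \<open>The number of subdiscs is read off from the measure.\<close>

lemma card_subdiscs:
  assumes "a \<in> \<O>" "j \<le> l"
  shows "card ((\<lambda>z. disc z l) ` disc a j) = q ^ (l - j)"
proof -
  have "measure M (disc a j) = card ((\<lambda>z. disc z l) ` disc a j) * radius l"
    using disc_subset_valring[OF assms(1)] disc_subset_disc[OF assms(2)]
    by (rule measure_union_of_discs)
  moreover have "measure M (disc a j) = real q ^ (l - j) * radius l"
    using measure_disc[OF assms(1)] radius_times_power[of "l - j" j] assms(2) by simp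
  ultimately have "real (card ((\<lambda>z. disc z l) ` disc a j)) = real q ^ (l - j)"
    using radius_pos[of l] by (metis mult_right_cancel less_irrefl)
  then show ?thesis
    by (metis of_nat_eq_iff of_nat_power)
qed

lemma measurable_if_preimage_discs:
  assumes "\<And>x. x \<in> \<O> \<Longrightarrow> G x \<in> \<O>" "\<And>x k. x \<in> \<O> \<Longrightarrow> G -` disc x k \<inter> \<O> \<in> sets M"
  shows "G \<in> M \<rightarrow>\<^sub>M M"
proof (rule measurable_sigma_sets[OF sets_eq[unfolded borel_O_eq_sigma_discs] valring_discs_subset_Pow])
  show "G \<in> space M \<rightarrow> \<O>"
    using assms(1) space_eq by blast
  fix b
  assume "b \<in> valring_discs"
  then show "G -` b \<inter> space M \<in> sets M"
    using assms(2) space_eq unfolding valring_discs_def by auto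
qed

lemma distr_eq_if_preimage_discs:
  assumes G: "G \<in> M \<rightarrow>\<^sub>M M"
    and preimage: "\<And>x k. x \<in> \<O> \<Longrightarrow> measure M (G -` disc x k \<inter> \<O>) = radius k"
  shows "distr M M G = M"
proof (rule measure_eqI_generator_eq[OF Int_stable_valring_discs valring_discs_subset_Pow,
      where A = "\<lambda>_. \<O>"])
  show "sets (distr M M G) = sigma_sets \<O> valring_discs" "sets M = sigma_sets \<O> valring_discs"
    by (simp_all add: sets_eq borel_O_eq_sigma_discs)
  show "range (\<lambda>_. \<O>) \<subseteq> valring_discs"
    unfolding valring_discs_def using disc_zero_zero zero_in_valring by blast
  show "(\<Union>i. \<O>) = \<O>" "emeasure (distr M M G) \<O> \<noteq> \<infinity>" for i :: nat
    using emeasure_distr[OF G, of \<O>] space_eq sets.top[of M] by simp_all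
  fix b
  assume b: "b \<in> valring_discs"
  then consider "b = {}" | x k where "b = disc x k" "x \<in> \<O>"
    unfolding valring_discs_def by blast
  then show "emeasure (distr M M G) b = emeasure M b"
  proof cases
    case 2
    have "b \<in> sets M"
      using 2 disc_in_sets by simp
    then have "emeasure (distr M M G) b = measure M (G -` b \<inter> \<O>)"
      using emeasure_distr[OF G] space_eq emeasure_eq_measure by simp
    also have "\<dots> = emeasure M b"
      using 2 preimage measure_disc emeasure_eq_measure by simp
    finally show ?thesis .
  qed simp
qed

end

section \<open>Measure preservation of \<open>f_tilde\<close>\<close>

lemma card_image_eq_if_same_fibres:
  assumes "\<And>z z'. z \<in> Q \<Longrightarrow> z' \<in> Q \<Longrightarrow> h z = h z' \<longleftrightarrow> g z = g z'"
  shows "card (h ` Q) = card (g ` Q)"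
proof (rule bij_betw_same_card)
  have g_inv_h: "g (inv_into Q h (h z)) = g z" if "z \<in> Q" for z
    using assms[of "inv_into Q h (h z)" z] that by (simp add: inv_into_into f_inv_into_f)
  have h_inv_g: "h (inv_into Q g (g z)) = h z" if "z \<in> Q" for z
    using assms[of "inv_into Q g (g z)" z] that by (simp add: inv_into_into f_inv_into_f)
  show "bij_betw (\<lambda>b. g (inv_into Q h b)) (h ` Q) (g ` Q)"
    by (rule bij_betw_byWitness[where f' = "\<lambda>b. h (inv_into Q g b)"])
      (auto simp: g_inv_h h_inv_g inv_into_into f_inv_into_f)
qed

locale scaling_on_valring = haar_measure +
  fixes f :: "'a \<Rightarrow> 'a" and lam :: real
  assumes lam_nonneg: "lam \<ge> 0"
    and scaling: "scaling_map absv q lam \<O> f"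
begin

text \<open>The scaling ratio lies in the value group \<open>q\<^sup>\<int>\<close>, so \<open>\<lambda>\<close> is a natural number.\<close>

lemma lam_integral: "lam = real (nat \<lfloor>lam\<rfloor>)"
proof -
  have "\<pi> \<in> \<O>"
    using prime_power_in_valring[of 1] by simp
  then have ratio: "absv (f \<pi> - f 0) = real q powr lam / real q"
    using scaling zero_in_valring unfolding scaling_map_def by simp
  then have "f \<pi> - f 0 \<noteq> 0"
    using q_gt_1 by auto
  then obtain n :: int where "absv (f \<pi> - f 0) = real q powr n"
    using absv_value_group by blast
  with ratio have "real q powr lam = real q powr (n + 1)"
    using q_gt_1 by (simp add: powr_add field_simps)
  then have "lam = n + 1"
    using q_gt_1 powr_inj[of "real q" lam "n + 1"] by simp
  then show ?thesis
    using lam_nonneg by simp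
qed

definition m :: nat where "m = nat \<lfloor>lam\<rfloor>"

lemma absv_f_diff: "x \<in> \<O> \<Longrightarrow> y \<in> \<O> \<Longrightarrow> absv (f x - f y) = real q ^ m * absv (x - y)"
  using scaling lam_integral q_gt_1 unfolding scaling_map_def m_def
  by (metis of_nat_0_less_iff powr_realpow zero_less_one order.strict_trans)

definition f_tilde :: "'a \<Rightarrow> 'a" where "f_tilde z = bracket absv \<pi> C (f z)"

lemma f_tilde_in_valring: "f_tilde z \<in> \<O>"
  unfolding f_tilde_def by (rule bracket_in_valring)

text \<open>On discs of radius \<open>q\<^sup>-\<^sup>m\<close> the values of \<open>f\<close> stay in one closed unit ball,
  where \<open>[\<cdot>]\<close> is a translation.\<close>

lemma absv_f_tilde_diff:
  assumes "z \<in> \<O>" "w \<in> \<O>" "absv (z - w) \<le> radius m"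
  shows "absv (f_tilde z - f_tilde w) = real q ^ m * absv (z - w)"
proof -
  have f_diff: "absv (f z - f w) = real q ^ m * absv (z - w)"
    using assms(1,2) by (rule absv_f_diff)
  also have "\<dots> \<le> real q ^ m * radius m"
    using assms(3) by (simp add: mult_left_mono)
  also have "\<dots> = 1"
    using radius_times_power[of m 0] by simp
  finally have "bracket absv \<pi> C (f w) - bracket absv \<pi> C (f z) = f w - f z"
    by (rule bracket_diff)
  then have "f_tilde z - f_tilde w = f z - f w"
    unfolding f_tilde_def by (simp add: algebra_simps)
  then show ?thesis
    using f_diff by simp
qed

lemma f_tilde_close_iff:
  assumes "z \<in> \<O>" "w \<in> \<O>" "absv (z - w) \<le> radius m"
  shows "absv (f_tilde z - f_tilde w) \<le> radius k \<longleftrightarrow> absv (z - w) \<le> radius (k + m)"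
proof -
  have "radius k = real q ^ m * radius (k + m)"
    by (rule radius_times_power[symmetric])
  then show ?thesis
    using absv_f_tilde_diff[OF assms] q_gt_1 by simp
qed

lemma f_tilde_meets_every_disc:
  assumes "a \<in> \<O>" "x \<in> \<O>"
  shows "\<exists>z\<in>disc a m. f_tilde z \<in> disc x k"
proof -
  let ?sub = "(\<lambda>z. disc z (k + m)) ` disc a m"
  let ?img = "(\<lambda>z. disc (f_tilde z) k) ` disc a m"
  let ?all = "(\<lambda>z. disc z k) ` \<O>"
  have "card ?img = card ?sub"
  proof (rule card_image_eq_if_same_fibres)
    fix z w
    assume zw: "z \<in> disc a m" "w \<in> disc a m"
    then have "z \<in> \<O>" "w \<in> \<O>"
      using disc_subset_valring[OF assms(1)] by blast+
    moreover have "absv (z - w) \<le> radius m"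
      using zw by (rule dist_le_if_same_disc)
    ultimately show "disc (f_tilde z) k = disc (f_tilde w) k \<longleftrightarrow> disc z (k + m) = disc w (k + m)"
      unfolding disc_eq_iff by (rule f_tilde_close_iff)
  qed
  also have "\<dots> = q ^ k"
    using card_subdiscs[OF assms(1), of m "k + m"] by simp
  also have "\<dots> = card ?all"
    using card_subdiscs[OF zero_in_valring, of 0 k] by (simp add: disc_zero_zero)
  finally have "card ?img = card ?all" .
  moreover have "?img \<subseteq> ?all"
    using f_tilde_in_valring by blast
  ultimately have "?img = ?all"
    using card_subset_eq[OF finite_discs[OF order_refl]] by metis
  then have "disc x k \<in> ?img"
    using assms(2) by simp
  then obtain z where "z \<in> disc a m" "disc (f_tilde z) k = disc x k"
    by (auto simp del: mem_disc)
  then show ?thesis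
    unfolding disc_eq_iff by auto
qed

lemma disc_subset_preimage:
  assumes "z \<in> \<O>" "f_tilde z \<in> disc x k"
  shows "disc z (k + m) \<subseteq> f_tilde -` disc x k \<inter> \<O>"
proof
  fix w
  assume w: "w \<in> disc z (k + m)"
  then have "w \<in> \<O>"
    using disc_subset_valring[OF assms(1)] by blast
  moreover have "absv (w - z) \<le> radius m"
    using w radius_antimono[of m "k + m"] by simp
  ultimately have "absv (f_tilde w - f_tilde z) \<le> radius k"
    using f_tilde_close_iff[OF _ assms(1)] w by simp
  then show "w \<in> f_tilde -` disc x k \<inter> \<O>"
    using assms(2) ultrametric_dist_le \<open>w \<in> \<O>\<close> by simp
qed

lemma preimage_disc_in_sets: "f_tilde -` disc x k \<inter> \<O> \<in> sets M"
proof -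
  have "absv_open absv (f_tilde -` disc x k \<inter> \<O>)"
    by (rule absv_openI_discs) (use disc_subset_preimage in blast)
  then show ?thesis
    unfolding sets_eq borel_O_def by blast
qed

lemma preimage_disc_inter_disc:
  assumes "a \<in> \<O>" "x \<in> \<O>"
  obtains z where "z \<in> \<O>" "f_tilde -` disc x k \<inter> \<O> \<inter> disc a m = disc z (k + m)"
proof -
  obtain z where z: "z \<in> disc a m" "f_tilde z \<in> disc x k"
    using f_tilde_meets_every_disc[OF assms] by blast
  then have "z \<in> \<O>"
    using disc_subset_valring[OF assms(1)] by blast
  have "f_tilde -` disc x k \<inter> \<O> \<inter> disc a m = disc z (k + m)"
  proof
    have "disc z (k + m) \<subseteq> disc a m"
      using z(1) by (intro disc_subset_disc) simp_all
    then show "disc z (k + m) \<subseteq> f_tilde -` disc x k \<inter> \<O> \<inter> disc a m"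
      using disc_subset_preimage[OF \<open>z \<in> \<O>\<close> z(2)] by blast
    show "f_tilde -` disc x k \<inter> \<O> \<inter> disc a m \<subseteq> disc z (k + m)"
    proof
      fix w
      assume w: "w \<in> f_tilde -` disc x k \<inter> \<O> \<inter> disc a m"
      then have "absv (w - z) \<le> radius m"
        using z(1) dist_le_if_same_disc[of w a m z] by blast
      moreover have "absv (f_tilde w - f_tilde z) \<le> radius k"
        using w z(2) dist_le_if_same_disc[of "f_tilde w" x k "f_tilde z"] by blast
      ultimately show "w \<in> disc z (k + m)"
        using f_tilde_close_iff[OF _ \<open>z \<in> \<O>\<close>] w by simp
    qed
  qed
  with \<open>z \<in> \<O>\<close> show ?thesis
    by (rule that)
qed

lemma measure_preimage_disc:
  assumes "x \<in> \<O>"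
  shows "measure M (f_tilde -` disc x k \<inter> \<O>) = radius k"
proof -
  let ?D = "(\<lambda>z. disc z m) ` \<O>"
  have "measure M (f_tilde -` disc x k \<inter> \<O>) = (\<Sum>b\<in>?D. measure M (f_tilde -` disc x k \<inter> \<O> \<inter> b))"
    using preimage_disc_in_sets by (rule measure_eq_sum_discs)
  also have "\<dots> = (\<Sum>b\<in>?D. radius (k + m))"
  proof (rule sum.cong)
    fix b
    assume "b \<in> ?D"
    then obtain a where "a \<in> \<O>" "b = disc a m"
      by blast
    moreover obtain z where "z \<in> \<O>" "f_tilde -` disc x k \<inter> \<O> \<inter> disc a m = disc z (k + m)"
      using preimage_disc_inter_disc[OF \<open>a \<in> \<O>\<close> assms] by blast
    ultimately show "measure M (f_tilde -` disc x k \<inter> \<O> \<inter> b) = radius (k + m)"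
      using measure_disc by simp
  qed simp
  also have "\<dots> = real q ^ m * radius (k + m)"
    using card_subdiscs[OF zero_in_valring, of 0 m] by (simp add: disc_zero_zero)
  also have "\<dots> = radius k"
    by (rule radius_times_power)
  finally show ?thesis .
qed

end

theorem lemma3p1:
  fixes absv :: "'a::field \<Rightarrow> real" and \<pi> :: 'a and q :: nat and C :: "'a set"
    and f :: "'a \<Rightarrow> 'a" and lam :: real and M :: "'a measure" and B :: "'a set"
  assumes "nonarch_local_field absv \<pi> q C"
    and "normalized_haar absv M"
    and "lam \<ge> 0"
    and "scaling_map absv q lam (valring absv) f"
    and "B \<in> sets M"
  shows "(\<lambda>x. bracket absv \<pi> C (f x)) -` B \<inter> valring absv \<in> sets M \<and>
         emeasure M ((\<lambda>x. bracket absv \<pi> C (f x)) -` B \<inter> valring absv) = emeasure M B"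
proof -
  interpret local_field absv \<pi> q C
    using assms(1) by (rule local_field_if_nonarch_local_field)
  interpret scaling_on_valring absv \<pi> q C M f lam
    using assms(2-4) by unfold_locales
  have measurable: "f_tilde \<in> M \<rightarrow>\<^sub>M M"
    using f_tilde_in_valring preimage_disc_in_sets by (rule measurable_if_preimage_discs)
  then have "distr M M f_tilde = M"
    using measure_preimage_disc by (rule distr_eq_if_preimage_discs)
  moreover have "(\<lambda>x. bracket absv \<pi> C (f x)) = f_tilde"
    by (simp add: f_tilde_def fun_eq_iff)
  ultimately show ?thesis
    using measurable_sets[OF measurable assms(5)] emeasure_distr[OF measurable assms(5)]
    by (simp add: space_eq)
qed

end
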